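(* For any $M\in\mathbb{N}$ and any $\delta>0$, there exists a $\textsc{ReLU}$ network $f:\mathbb R\rightarrow\mathbb R^2$ of width $2$ such that for all $x\in[0,1]\setminus\mathcal D_{M,\delta}$, $$f(x)=\big(q_M(x),\ 2^M\,(x-q_M(x))\big),$$ where $\mathcal D_{M,\delta}:=\bigcup_{i=1}^{2^M-1}(i\cdot2^{-M}-\delta,\ i\cdot 2^{-M})$. Furthermore, $f(\mathbb R)\subset[0,1-2^{-M}]\times[0,1]$.
   Context: $\mathcal C_M:=\{0,2^{-M},2\cdot2^{-M},\dots,1-2^{-M}\}$ and $q_M:[0,1]\to\mathcal C_M$, $q_M(x)=\max\{c\in\mathcal C_M:c\le x\}$. A $\textsc{ReLU}$ network is $t_L\circ\sigma_{L-1}\circ\cdots\circ\sigma_1\circ t_1$ with affine $t_\ell:\mathbb R^{d_{\ell-1}}\to\mathbb R^{d_\ell}$ and coordinatewise $\textsc{ReLU}$ $\sigma_\ell$; its width is $\max\{d_1,\dots,d_{L-1}\}$. *)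

theory Defs
  imports Complex_Main
begin

definition grid :: "nat \<Rightarrow> real set" where
  "grid M = {real k / 2 ^ M | k. k < 2 ^ M}"

definition qM :: "nat \<Rightarrow> real \<Rightarrow> real" where
  "qM M x = Max {c \<in> grid M. c \<le> x}"

definition Dset :: "nat \<Rightarrow> real \<Rightarrow> real set" where
  "Dset M \<delta> = (\<Union>i\<in>{1..2 ^ M - 1::nat}. {real i / 2 ^ M - \<delta> <..< real i / 2 ^ M})"

text \<open>Vectors in R^d are functions nat => real, only indices < d matter.
  A layer is an affine map t : R^{d_in} -> R^{d_out}, recorded as (d_in, W, b), computing
  (t v) i = (sum j<d_in. W i j * v j) + b i.  A network is the list [t_1, ..., t_L] of its
  affine maps; its realization is t_L o sigma o ... o sigma o t_1.\<close>
type_synonym layer = "nat \<times> (nat \<Rightarrow> nat \<Rightarrow> real) \<times> (nat \<Rightarrow> real)"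

definition affine_app :: "layer \<Rightarrow> (nat \<Rightarrow> real) \<Rightarrow> (nat \<Rightarrow> real)" where
  "affine_app l v = (case l of (d, W, b) \<Rightarrow> (\<lambda>i. (\<Sum>j<d. W i j * v j) + b i))"

definition relu_vec :: "(nat \<Rightarrow> real) \<Rightarrow> (nat \<Rightarrow> real)" where
  "relu_vec v = (\<lambda>i. max 0 (v i))"

fun run_net :: "layer list \<Rightarrow> (nat \<Rightarrow> real) \<Rightarrow> (nat \<Rightarrow> real)" where
  "run_net [] v = v"
| "run_net [l] v = affine_app l v"
| "run_net (l # l' # ls) v = run_net (l' # ls) (relu_vec (affine_app l v))"

definition in_dim :: "layer list \<Rightarrow> nat" where
  "in_dim N = fst (hd N)"

text \<open>Width = max of the hidden dimensions d_1, ..., d_{L-1}, i.e. the input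
  dimensions of the layers t_2, ..., t_L.\<close>
definition width :: "layer list \<Rightarrow> nat" where
  "width N = foldr max (map fst (tl N)) 0"

definition realize2 :: "layer list \<Rightarrow> real \<Rightarrow> real \<times> real" where
  "realize2 N x = (let y = run_net N (\<lambda>i. if i = 0 then x else 0) in (y 0, y 1))"

end

(* The network keeps the input, clipped to [0,1] as z, in its first neuron and a remainder t,
   initially z, in its second.  It sweeps over the grid points c = k 2^-M, k = 1, ..., 2^M - 1:
   a point c <= z resets t to z - c, while a point c > z leaves t alone as long as
   t <= K (c - z); for the slope K = 2^-M / delta this holds whenever z <= c - delta, i.e.
   outside D_{M,delta}.  Each step is a min and a max of t with affine functions of z, hence a
   few ReLU units acting on the second neuron; the first neuron survives every ReLU because
   z >= 0.  After the sweep t = z - q_M(z).  Clamping t to [max 0 (z + 2^-M - 1), min z 2^-M]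
   does not change this value but enforces the range bound for every input, and the last
   layer reads out (z - t, 2^M t). *)

theory Submission
  imports Defs
begin

type_synonym relu_unit = "real \<times> real \<times> real"

fun apply_unit :: "real \<Rightarrow> real \<Rightarrow> relu_unit \<Rightarrow> real" where
  "apply_unit z t (s, a, b) = max 0 (s * t + a * z + b)"

abbreviation run_units :: "relu_unit list \<Rightarrow> real \<Rightarrow> real \<Rightarrow> real" where
  "run_units us z t \<equiv> foldl (apply_unit z) t us"

text \<open>Via \<open>min u t = u - max 0 (u - t)\<close> and \<open>max u t = u + max 0 (t - u)\<close>.\<close>
definition min_units :: "real \<Rightarrow> real \<Rightarrow> relu_unit list" where
  "min_units a b = [(-1, a, b), (-1, a, b)]"

definition max_units :: "real \<Rightarrow> real \<Rightarrow> relu_unit list" where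
  "max_units a b = [(1, -a, -b), (1, a, b)]"

lemma run_min_units [simp]: "run_units (min_units a b) z t = max 0 (min (a * z + b) t)"
  unfolding min_units_def by (auto simp: max_def min_def)

lemma run_max_units [simp]: "run_units (max_units a b) z t = max 0 (max (a * z + b) t)"
  unfolding max_units_def by (auto simp: max_def min_def)

definition step_units :: "real \<Rightarrow> real \<Rightarrow> relu_unit list" where
  "step_units K c = min_units (-K) (K * c) @ max_units 1 (-c)"

lemma run_step_units:
  "run_units (step_units K c) z t = max 0 (max (z - c) (max 0 (min (K * (c - z)) t)))"
  unfolding step_units_def by (simp add: algebra_simps)

lemma run_step_units_passed:
  assumes "0 \<le> K" "c \<le> z"
  shows "run_units (step_units K c) z t = z - c"
proof -
  have "K * (c - z) \<le> 0" using assms by (simp add: mult_nonneg_nonpos)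
  then show ?thesis using assms by (simp add: run_step_units)
qed

lemma run_step_units_ahead:
  assumes "z \<le> c" "0 \<le> t" "t \<le> K * (c - z)"
  shows "run_units (step_units K c) z t = t"
  using assms by (simp add: run_step_units)

definition clamp_units :: "real \<Rightarrow> relu_unit list" where
  "clamp_units h = max_units 1 (h - 1) @ min_units 1 0 @ min_units 0 h"

lemma run_clamp_units:
  "run_units (clamp_units h) z t = max 0 (min h (max 0 (min z (max 0 (max (z + h - 1) t)))))"
  unfolding clamp_units_def by (simp add: min.commute algebra_simps)

lemma run_clamp_units_bounds:
  assumes "0 \<le> z" "z \<le> 1" "0 \<le> h" "h \<le> 1"
  shows "run_units (clamp_units h) z t \<in> {max 0 (z + h - 1) .. min z h}"
  using assms unfolding run_clamp_units by (auto simp: max_def min_def)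

lemma run_clamp_units_id:
  assumes "t \<in> {max 0 (z + h - 1) .. min z h}"
  shows "run_units (clamp_units h) z t = t"
proof -
  have "0 \<le> t" "z + h - 1 \<le> t" "t \<le> z" "t \<le> h" using assms by auto
  then show ?thesis unfolding run_clamp_units by (simp add: max_def min_def)
qed

text \<open>The top cell \<open>[1 - 2^-M, \<infinity>)\<close> is unbounded, just as \<open>qM M\<close> is constant there.\<close>
definition dyadic_cell :: "nat \<Rightarrow> real \<Rightarrow> nat \<Rightarrow> bool" where
  "dyadic_cell M x m \<longleftrightarrow>
     m < 2 ^ M \<and> real m / 2 ^ M \<le> x \<and> (x < (real m + 1) / 2 ^ M \<or> m = 2 ^ M - 1)"

lemma dyadic_cell_exists:
  assumes "0 \<le> x"
  shows "\<exists>m. dyadic_cell M x m"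
proof -
  define m where "m = min (nat \<lfloor>x * 2 ^ M\<rfloor>) (2 ^ M - 1)"
  have "real (nat \<lfloor>x * 2 ^ M\<rfloor>) = of_int \<lfloor>x * 2 ^ M\<rfloor>" using assms by simp
  then have floor: "real (nat \<lfloor>x * 2 ^ M\<rfloor>) \<le> x * 2 ^ M" "x * 2 ^ M < real (nat \<lfloor>x * 2 ^ M\<rfloor>) + 1"
    using floor_correct[of "x * 2 ^ M"] by linarith+
  have "m < 2 ^ M" unfolding m_def by (simp add: min.strict_coboundedI2)
  moreover have "real m \<le> x * 2 ^ M" using floor(1) unfolding m_def by linarith
  moreover have "x * 2 ^ M < real m + 1 \<or> m = 2 ^ M - 1" using floor(2) unfolding m_def by linarith
  ultimately have "dyadic_cell M x m" unfolding dyadic_cell_def by (simp add: field_simps)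
  then show ?thesis ..
qed

lemma qM_eq_dyadic_cell:
  assumes "dyadic_cell M x m"
  shows "qM M x = real m / 2 ^ M"
  unfolding qM_def
proof (rule Max_eqI)
  have "grid M = (\<lambda>k. real k / 2 ^ M) ` {..<2 ^ M}" unfolding grid_def by auto
  then show "finite {c \<in> grid M. c \<le> x}" by simp
  show "real m / 2 ^ M \<in> {c \<in> grid M. c \<le> x}" using assms unfolding grid_def dyadic_cell_def by auto
next
  fix c assume "c \<in> {c \<in> grid M. c \<le> x}"
  then obtain k where k: "k < 2 ^ M" "c = real k / 2 ^ M" "c \<le> x" unfolding grid_def by auto
  show "c \<le> real m / 2 ^ M"
  proof (rule ccontr)
    assume "\<not> c \<le> real m / 2 ^ M"
    then have "m < k" using k(2) by (simp add: divide_le_cancel)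
    then have "(real m + 1) / 2 ^ M \<le> c" using k(2) by (simp add: divide_right_mono)
    then show False using assms k \<open>m < k\<close> unfolding dyadic_cell_def by auto
  qed
qed

lemma dyadic_cell_remainder:
  assumes "dyadic_cell M x m" "x \<le> 1"
  shows "x - real m / 2 ^ M \<in> {max 0 (x + 1 / 2 ^ M - 1) .. min x (1 / 2 ^ M)}"
proof -
  have "x \<le> (real m + 1) / 2 ^ M"
    using assms unfolding dyadic_cell_def by (auto simp: of_nat_diff)
  then have "x - real m / 2 ^ M \<le> 1 / 2 ^ M" by (simp add: add_divide_distrib)
  moreover have "real m + 1 \<le> 2 ^ M"
    using assms(1) of_nat_le_iff[of "m + 1" "2 ^ M", where 'a = real] unfolding dyadic_cell_def by simp
  then have "real m / 2 ^ M \<le> 1 - 1 / 2 ^ M" by (simp add: field_simps)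
  ultimately show ?thesis using assms(1) unfolding dyadic_cell_def by auto
qed

text \<open>The slope \<open>K\<close> is chosen so that \<open>K * \<delta> = 2^-M\<close>: outside \<open>Dset M \<delta>\<close>, a grid point
  lying ahead of \<open>z\<close> never cuts the remainder, which is below \<open>2^-M\<close>.\<close>
definition sweep_units :: "nat \<Rightarrow> real \<Rightarrow> nat \<Rightarrow> relu_unit list" where
  "sweep_units M \<delta> n = concat (map (\<lambda>k. step_units (1 / (2 ^ M * \<delta>)) (real k / 2 ^ M)) [1..<Suc n])"

lemma run_sweep_units:
  assumes "0 < \<delta>" "dyadic_cell M z m" "z \<notin> Dset M \<delta>" "n < 2 ^ M"
  shows "run_units (sweep_units M \<delta> n) z z = z - real (min n m) / 2 ^ M"
  using \<open>n < 2 ^ M\<close>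
proof (induction n)
  case 0
  then show ?case by (simp add: sweep_units_def)
next
  case (Suc n)
  define K where "K = 1 / (2 ^ M * \<delta>)"
  define c where "c = real (Suc n) / 2 ^ M"
  have sweep: "run_units (sweep_units M \<delta> (Suc n)) z z
      = run_units (step_units K c) z (z - real (min n m) / 2 ^ M)"
    using Suc by (simp add: sweep_units_def K_def c_def)
  show ?case
  proof (cases "Suc n \<le> m")
    case True
    then have "c \<le> real m / 2 ^ M" unfolding c_def by (simp add: divide_right_mono)
    then have "c \<le> z" using assms(2) unfolding dyadic_cell_def by simp
    then show ?thesis using True sweep run_step_units_passed[of K c z] assms(1)
      by (simp add: K_def c_def)
  next
    case False
    have "z < (real m + 1) / 2 ^ M" using assms(2) False Suc.prems unfolding dyadic_cell_def by auto
    also have "\<dots> \<le> c" using False unfolding c_def by (simp add: divide_right_mono)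
    finally have "z < c" .
    moreover have "Suc n \<in> {1..2 ^ M - 1}" using Suc.prems by simp
    ultimately have "z \<le> c - \<delta>" using assms(3) unfolding Dset_def c_def by force
    then have "1 / 2 ^ M \<le> K * (c - z)" using assms(1) unfolding K_def by (simp add: field_simps)
    moreover have "0 \<le> z - real m / 2 ^ M" using assms(2) unfolding dyadic_cell_def by simp
    moreover have "z - real m / 2 ^ M < 1 / 2 ^ M"
      using \<open>z < (real m + 1) / 2 ^ M\<close> by (simp add: add_divide_distrib)
    ultimately show ?thesis using False sweep \<open>z < c\<close> run_step_units_ahead[of z c] by simp
  qed
qed

lemma affine_app_dim1: "affine_app (1, W, b) v i = W i 0 * v 0 + b i"
  by (simp add: affine_app_def)

lemma affine_app_dim2: "affine_app (2, W, b) v i = W i 0 * v 0 + W i 1 * v 1 + b i"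
  by (simp add: affine_app_def numeral_2_eq_2 lessThan_Suc)

lemma run_net_Cons: "ls \<noteq> [] \<Longrightarrow> run_net (l # ls) v = run_net ls (relu_vec (affine_app l v))"
  by (cases ls) auto

fun unit_layer :: "relu_unit \<Rightarrow> layer" where
  "unit_layer (s, a, b) =
     (2, \<lambda>i j. if i = 0 then (if j = 0 then 1 else 0) else if i = 1 then (if j = 0 then a else s) else 0,
      \<lambda>i. if i = 1 then b else 0)"

definition readout_layer :: "real \<Rightarrow> layer" where
  "readout_layer c =
     (2, \<lambda>i j. if i = 0 then (if j = 0 then 1 else -1) else if i = 1 then (if j = 0 then 0 else c) else 0,
      \<lambda>i. 0)"

definition input_layer :: layer where
  "input_layer = (1, \<lambda>i j. if i \<le> 1 then 1 else 0, \<lambda>i. if i = 1 then -1 else 0)"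

definition clip_layer :: layer where
  "clip_layer = (2, \<lambda>i j. if i \<le> 1 then (if j = 0 then 1 else -1) else 0, \<lambda>i. 0)"

lemma unit_layer_relu:
  assumes "0 \<le> v 0"
  shows "relu_vec (affine_app (unit_layer u) v) 0 = v 0"
    and "relu_vec (affine_app (unit_layer u) v) 1 = apply_unit (v 0) (v 1) u"
proof -
  obtain s a b where "u = (s, a, b)" by (cases u)
  then show "relu_vec (affine_app (unit_layer u) v) 0 = v 0"
    and "relu_vec (affine_app (unit_layer u) v) 1 = apply_unit (v 0) (v 1) u"
    using assms by (simp_all add: relu_vec_def affine_app_dim2 algebra_simps)
qed

lemma run_unit_layers_readout:
  assumes "0 \<le> v 0"
  shows "(run_net (map unit_layer us @ [readout_layer c]) v 0,
          run_net (map unit_layer us @ [readout_layer c]) v 1)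
       = (v 0 - run_units us (v 0) (v 1), c * run_units us (v 0) (v 1))"
  using assms
proof (induction us arbitrary: v)
  case Nil
  then show ?case by (simp add: readout_layer_def affine_app_dim2)
next
  case (Cons u us)
  define w where "w = relu_vec (affine_app (unit_layer u) v)"
  have w: "w 0 = v 0" "w 1 = apply_unit (v 0) (v 1) u"
    using unit_layer_relu[of v u] Cons.prems unfolding w_def by simp_all
  have "run_net (map unit_layer (u # us) @ [readout_layer c]) v
      = run_net (map unit_layer us @ [readout_layer c]) w"
    by (simp add: run_net_Cons w_def)
  then show ?case using Cons.IH[of w] Cons.prems w by simp
qed

lemma input_clip_layers:
  assumes "i \<le> 1"
  shows "relu_vec (affine_app clip_layer (relu_vec (affine_app input_layer (\<lambda>i. if i = 0 then x else 0)))) i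
    = max 0 (min x 1)"
  using assms
  unfolding input_layer_def clip_layer_def affine_app_dim1 affine_app_dim2 relu_vec_def
  by (auto simp: max_def min_def)

definition quantizer_net :: "nat \<Rightarrow> real \<Rightarrow> layer list" where
  "quantizer_net M \<delta> = input_layer # clip_layer #
     map unit_layer (sweep_units M \<delta> (2 ^ M - 1) @ clamp_units (1 / 2 ^ M)) @ [readout_layer (2 ^ M)]"

lemma realize2_quantizer_net:
  "realize2 (quantizer_net M \<delta>) x =
    (let z = max 0 (min x 1); r = run_units (sweep_units M \<delta> (2 ^ M - 1) @ clamp_units (1 / 2 ^ M)) z z
     in (z - r, 2 ^ M * r))"
proof -
  define us where "us = sweep_units M \<delta> (2 ^ M - 1) @ clamp_units (1 / 2 ^ M)"
  define v where
    "v = relu_vec (affine_app clip_layer (relu_vec (affine_app input_layer (\<lambda>i. if i = 0 then x else 0))))"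
  have v: "v 0 = max 0 (min x 1)" "v 1 = max 0 (min x 1)"
    unfolding v_def by (simp_all add: input_clip_layers)
  have "run_net (quantizer_net M \<delta>) (\<lambda>i. if i = 0 then x else 0)
      = run_net (map unit_layer us @ [readout_layer (2 ^ M)]) v"
    unfolding quantizer_net_def us_def[symmetric] by (simp add: run_net_Cons v_def)
  then show ?thesis
    using run_unit_layers_readout[of v us "2 ^ M"] v unfolding realize2_def us_def[symmetric] Let_def
    by simp
qed

lemma width_quantizer_net: "width (quantizer_net M \<delta>) = 2"
proof -
  define ws where "ws = map fst (tl (quantizer_net M \<delta>))"
  have "fst (unit_layer u) = 2" for u by (cases u) simp
  then have "\<forall>d \<in> set ws. d = 2"
    by (auto simp: ws_def quantizer_net_def clip_layer_def readout_layer_def)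
  then have "ws = replicate (length ws) 2" by (metis replicate_length_same)
  moreover have "ws \<noteq> []" by (simp add: ws_def quantizer_net_def)
  ultimately show ?thesis unfolding width_def ws_def[symmetric]
    by (metis foldr_max_sorted max_0R nth_replicate length_greater_0_conv rev_replicate sorted_replicate)
qed

lemma realize2_quantizer_net_range:
  "realize2 (quantizer_net M \<delta>) x \<in> {0 .. 1 - 1 / 2 ^ M} \<times> {0 .. 1}"
proof -
  define z where "z = max 0 (min x 1)"
  define r where "r = run_units (clamp_units (1 / 2 ^ M)) z (run_units (sweep_units M \<delta> (2 ^ M - 1)) z z)"
  have "r \<in> {max 0 (z + 1 / 2 ^ M - 1) .. min z (1 / 2 ^ M)}"
    unfolding r_def by (rule run_clamp_units_bounds) (simp_all add: z_def)
  then have "z - r \<in> {0 .. 1 - 1 / 2 ^ M}" "2 ^ M * r \<in> {0 .. 1}"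
    by (auto simp: field_simps)
  moreover have "realize2 (quantizer_net M \<delta>) x = (z - r, 2 ^ M * r)"
    unfolding realize2_quantizer_net z_def r_def Let_def by simp
  ultimately show ?thesis by simp
qed

lemma realize2_quantizer_net_exact:
  assumes "0 < \<delta>" "x \<in> {0 .. 1} - Dset M \<delta>"
  shows "realize2 (quantizer_net M \<delta>) x = (qM M x, 2 ^ M * (x - qM M x))"
proof -
  obtain m where m: "dyadic_cell M x m" using dyadic_cell_exists assms(2) by auto
  have "m < 2 ^ M" using m unfolding dyadic_cell_def by simp
  then have "min (2 ^ M - 1) m = m" by simp
  then have "run_units (sweep_units M \<delta> (2 ^ M - 1)) x x = x - real m / 2 ^ M"
    using run_sweep_units[OF assms(1) m, of "2 ^ M - 1"] assms(2) by simp
  moreover have "x - real m / 2 ^ M \<in> {max 0 (x + 1 / 2 ^ M - 1) .. min x (1 / 2 ^ M)}"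
    using dyadic_cell_remainder[OF m] assms(2) by simp
  ultimately have "run_units (sweep_units M \<delta> (2 ^ M - 1) @ clamp_units (1 / 2 ^ M)) x x = x - real m / 2 ^ M"
    by (simp add: run_clamp_units_id)
  moreover have "max 0 (min x 1) = x" using assms(2) by simp
  ultimately show ?thesis
    unfolding realize2_quantizer_net qM_eq_dyadic_cell[OF m] Let_def by simp
qed

theorem lemma11:
  fixes M :: nat and \<delta> :: real
  assumes "\<delta> > 0"
  shows "\<exists>N :: layer list. N \<noteq> [] \<and> in_dim N = 1 \<and> width N = 2 \<and>
           (\<forall>x \<in> {0..1} - Dset M \<delta>.
              realize2 N x = (qM M x, 2 ^ M * (x - qM M x))) \<and>
           (\<forall>x :: real. realize2 N x \<in> {0..1 - 1 / 2 ^ M} \<times> {0..1})"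
proof (intro exI conjI ballI allI)
  show "quantizer_net M \<delta> \<noteq> []" by (simp add: quantizer_net_def)
  show "in_dim (quantizer_net M \<delta>) = 1" by (simp add: in_dim_def quantizer_net_def input_layer_def)
qed (simp_all add: assms width_quantizer_net realize2_quantizer_net_exact realize2_quantizer_net_range)

end
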